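(* For all integers $n,m\ge0$, $$\sum_{k=0}^n\binom{n}{k}(-1)^kH_k(m)=(-1)^n\frac{m!}{n!}s(n,m)\qquad\text{and}\qquad \sum_{k=m}^n\binom{n}{k}\frac{s(k,m)}{k!}=\frac{1}{m!}H_n(m).$$
   Context: For integers $m\ge 1$, $n\ge 0$, the multiple harmonic-like numbers are $H_n(m)=\sum_{1\le k_1+k_2+\cdots+k_m\le n}\frac{1}{k_1k_2\cdots k_m}$ (sum over positive integers $k_1,\dots,k_m$), with $H_n(0)=1$ for $n\ge 0$ and $H_0(m)=0$ for $m\ge1$. Equivalently, $\sum_{n\ge0}H_n(m)z^n=\frac{(-\ln(1-z))^m}{1-z}$. The (signed) Stirling numbers of the first kind $s(n,k)$ are defined by $\sum_{n\ge k}s(n,k)\frac{z^n}{n!}=\frac{\ln^k(1+z)}{k!}$, with $s(n,k)=0$ for $n<k$. *)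

theory Defs
  imports "HOL-Analysis.Analysis" "HOL-Combinatorics.Stirling"
begin

definition sstirling :: "nat \<Rightarrow> nat \<Rightarrow> int" where
  "sstirling n k = (-1) ^ (n - k) * int (stirling n k)"

text \<open>For m = 0 the only
tuple is the empty one, giving H_n(0) = 1; for n = 0, m >= 1 the sum is empty.\<close>
definition Hm :: "nat \<Rightarrow> nat \<Rightarrow> real" where
  "Hm n m = (\<Sum>k\<in>{k \<in> {..<m} \<rightarrow>\<^sub>E {1..n}. (\<Sum>i<m. k i) \<le> n}.
              1 / (\<Prod>i<m. real (k i)))"

end

theory Submission
  imports Defs "HOL-Computational_Algebra.Formal_Power_Series" "HOL-Computational_Algebra.Polynomial"
begin

text \<open>
  Splitting off the last coordinate gives \<open>H\<^sub>n(m+1) = \<Sum>\<^sub>j H\<^sub>n\<^sub>-\<^sub>j(m) / j\<close>,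
  so \<open>H(m)\<close> has generating function \<open>L\<^sup>m / (1 - z)\<close> with \<open>L = -ln(1 - z)\<close>.
  Since \<open>(1 - z) L' = 1\<close> and the exponential generating functions \<open>E\<^sub>m\<close> of the unsigned
  Stirling numbers satisfy \<open>(1 - z) E\<^sub>m\<^sub>+\<^sub>1' = E\<^sub>m\<close>, the series \<open>L\<^sup>m\<close> and \<open>m! E\<^sub>m\<close>
  obey the same first-order recursion, so they agree and
  \<open>H\<^sub>n(m) = m! \<Sum>\<^sub>k\<^sub>\<le>\<^sub>n |s(k,m)| / k!\<close>.
  The second identity is then the coefficient of \<open>x\<^sup>m\<close> in
  \<open>\<Sum>\<^sub>k C(n,k) C(x,k) = C(x+n,n)\<close>, expanding the left side in falling and the right side in
  rising factorials; the first identity is its binomial inverse.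
\<close>

lemma PiE_sum_le_range_eq:
  fixes n d m :: nat
  assumes "n \<le> d"
  shows "{k \<in> {..<m} \<rightarrow>\<^sub>E {1..d}. (\<Sum>i<m. k i) \<le> n}
       = {k \<in> {..<m} \<rightarrow>\<^sub>E {1..n}. (\<Sum>i<m. k i) \<le> n}"
proof -
  have "k i \<le> n" if "(\<Sum>i<m. k i) \<le> n" "i < m" for k :: "nat \<Rightarrow> nat" and i
    using that member_le_sum[of i "{..<m}" k] by simp
  then show ?thesis
    using assms by (auto simp: PiE_iff Ball_def) (meson atLeastAtMost_iff order_trans)
qed

lemma Hm_Suc: "Hm n (Suc m) = (\<Sum>j=1..n. Hm (n - j) m / real j)"
proof -
  let ?T = "{..<m} \<rightarrow>\<^sub>E {1..n}"
  let ?w = "\<lambda>k. 1 / (\<Prod>i<m. real (k i))"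
  have sum_filter: "(\<Sum>k\<in>{k \<in> I \<rightarrow>\<^sub>E {1..d}. P k}. g k)
      = (\<Sum>k\<in>I \<rightarrow>\<^sub>E {1..d}. if P k then g k else 0)"
    if "finite I" for I :: "nat set" and d :: nat and P and g :: "(nat \<Rightarrow> nat) \<Rightarrow> real"
    using that by (intro sum.inter_filter finite_PiE) auto
  have Hm_filter: "Hm (n - j) m = (\<Sum>k\<in>?T. if (\<Sum>i<m. k i) \<le> n - j then ?w k else 0)" for j
    unfolding Hm_def PiE_sum_le_range_eq[of "n - j" n, symmetric, OF diff_le_self]
    by (rule sum_filter) simp
  have upd_sum: "(\<Sum>i<m. if i = m then j else k i) = (\<Sum>i<m. k i)"
    and upd_prod: "(\<Prod>i<m. real (if i = m then j else k i)) = (\<Prod>i<m. real (k i))"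
    for k :: "nat \<Rightarrow> nat" and j
    by (auto intro: sum.cong prod.cong)
  have if_divide_zero: "(if P then a else 0) / b = (if P then a / b else 0)" for P and a b :: real
    by simp
  have "Hm n (Suc m)
      = (\<Sum>x\<in>PiE (insert m {..<m}) (\<lambda>_. {1..n}).
           if x m + (\<Sum>i<m. x i) \<le> n then 1 / (real (x m) * (\<Prod>i<m. real (x i))) else 0)"
    unfolding Hm_def lessThan_Suc by (subst sum_filter) (auto intro!: sum.cong)
  also have "\<dots> = (\<Sum>(j, k)\<in>{1..n} \<times> ?T.
           if (\<Sum>i<m. k i) + j \<le> n then ?w k / real j else 0)"
    unfolding PiE_insert_eq
    by (subst sum.reindex[OF inj_combinator])
       (simp_all add: split_def upd_sum upd_prod add.commute mult.commute cong: if_cong)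
  also have "\<dots> = (\<Sum>j=1..n. \<Sum>k\<in>?T. if (\<Sum>i<m. k i) \<le> n - j then ?w k / real j else 0)"
    by (simp add: sum.cartesian_product le_diff_conv2)
  also have "\<dots> = (\<Sum>j=1..n. Hm (n - j) m / real j)"
    by (simp add: Hm_filter sum_divide_distrib if_divide_zero)
  finally show ?thesis .
qed

definition fps_minus_ln_one_minus :: "'a::field_char_0 fps" where
  "fps_minus_ln_one_minus = Abs_fps (\<lambda>j. if j = 0 then 0 else 1 / of_nat j)"

definition stirling_egf :: "nat \<Rightarrow> 'a::field_char_0 fps" where
  "stirling_egf m = Abs_fps (\<lambda>n. of_nat (stirling n m) / fact n)"

lemma fps_nth_minus_ln_one_minus [simp]:
  "fps_nth fps_minus_ln_one_minus n = (if n = 0 then 0 else 1 / of_nat n)"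
  by (simp add: fps_minus_ln_one_minus_def)

lemma fps_nth_stirling_egf [simp]: "fps_nth (stirling_egf m) n = of_nat (stirling n m) / fact n"
  by (simp add: stirling_egf_def)

lemma one_minus_fps_X_ne_0 [simp]: "(1 - fps_X :: 'a::comm_ring_1 fps) \<noteq> 0"
proof
  assume "(1 - fps_X :: 'a fps) = 0"
  then have "fps_nth (1 - fps_X :: 'a fps) 0 = 0" by simp
  then show False by simp
qed

lemma fps_nth_one_minus_X_mult_0 [simp]:
  "fps_nth ((1 - fps_X) * f) 0 = fps_nth (f :: 'a::comm_ring_1 fps) 0"
  by (simp add: algebra_simps)

lemma fps_nth_one_minus_X_mult_Suc [simp]:
  "fps_nth ((1 - fps_X) * f) (Suc n) = fps_nth f (Suc n) - fps_nth (f :: 'a::comm_ring_1 fps) n"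
  by (simp add: algebra_simps)

lemma fps_deriv_minus_ln_one_minus:
  "(1 - fps_X) * fps_deriv fps_minus_ln_one_minus = (1 :: 'a::field_char_0 fps)"
proof (rule fps_ext)
  fix n
  show "fps_nth ((1 - fps_X) * fps_deriv fps_minus_ln_one_minus) n = fps_nth (1 :: 'a fps) n"
    by (cases n) (simp_all del: of_nat_Suc)
qed

lemma stirling_egf_0 [simp]: "stirling_egf 0 = 1"
  by (rule fps_ext) simp

lemma fps_nth_deriv_stirling_egf:
  "fps_nth (fps_deriv (stirling_egf m)) k = (of_nat (stirling (Suc k) m) / fact k :: 'a::field_char_0)"
  by (simp add: fact_Suc field_simps del: of_nat_Suc)

lemma fps_deriv_stirling_egf:
  "(1 - fps_X) * fps_deriv (stirling_egf (Suc m)) = (stirling_egf m :: 'a::field_char_0 fps)"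
proof (rule fps_ext)
  fix n
  show "fps_nth ((1 - fps_X) * fps_deriv (stirling_egf (Suc m))) n
      = fps_nth (stirling_egf m :: 'a fps) n"
  proof (cases n)
    case 0
    then show ?thesis by (simp add: fps_nth_deriv_stirling_egf)
  next
    case (Suc p)
    have quotient: "(of_nat (Suc p) * a + b) / fact (Suc p) - a / fact p = b / (fact (Suc p) :: 'a)"
      for a b :: 'a
      by (simp add: fact_Suc field_simps del: of_nat_Suc)
    have "fps_nth ((1 - fps_X) * fps_deriv (stirling_egf (Suc m))) n
        = of_nat (stirling (Suc (Suc p)) (Suc m)) / fact (Suc p)
          - of_nat (stirling (Suc p) (Suc m)) / (fact p :: 'a)"
      unfolding Suc fps_nth_one_minus_X_mult_Suc fps_nth_deriv_stirling_egf ..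
    also have "\<dots> = of_nat (stirling (Suc p) m) / fact (Suc p)"
      by (simp only: stirling.simps of_nat_add of_nat_mult quotient)
    finally show ?thesis
      by (simp add: Suc del: stirling.simps)
  qed
qed

lemma fps_minus_ln_one_minus_power:
  "fps_minus_ln_one_minus ^ m = fps_const (fact m) * (stirling_egf m :: 'a::field_char_0 fps)"
proof (induction m)
  case 0
  show ?case by simp
next
  case (Suc m)
  let ?L = "fps_minus_ln_one_minus :: 'a fps" and ?E = "stirling_egf (Suc m) :: 'a fps"
  have "(1 - fps_X) * fps_deriv (?L ^ Suc m)
      = fps_const (of_nat (Suc m)) * ((1 - fps_X) * fps_deriv ?L) * ?L ^ m"
    unfolding fps_deriv_power diff_Suc_1 by (simp only: ac_simps)
  also have "\<dots> = fps_const (fact (Suc m)) * stirling_egf m"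
    by (simp add: fps_deriv_minus_ln_one_minus Suc.IH fact_Suc mult.assoc del: of_nat_Suc)
  also have "\<dots> = (1 - fps_X) * fps_deriv (fps_const (fact (Suc m)) * ?E)"
    by (simp add: fps_deriv_stirling_egf mult.left_commute)
  finally have "fps_deriv (?L ^ Suc m) = fps_deriv (fps_const (fact (Suc m)) * ?E)"
    by simp
  then show ?case
    unfolding fps_deriv_eq_iff by simp
qed

lemma Hm_eq_fps_nth:
  "Hm n m = fps_nth (fps_minus_ln_one_minus ^ m * inverse (1 - fps_X)) n"
proof (induction m arbitrary: n)
  case 0
  show ?case by (simp add: Hm_def fps_inverse_one_minus_fps_X)
next
  case (Suc m)
  let ?G = "fps_minus_ln_one_minus ^ m * inverse (1 - fps_X) :: real fps"
  have "fps_nth (fps_minus_ln_one_minus ^ Suc m * inverse (1 - fps_X)) n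
      = (\<Sum>i=0..n. fps_nth fps_minus_ln_one_minus i * fps_nth ?G (n - i))"
    by (simp add: mult.assoc fps_mult_nth)
  also have "\<dots> = (\<Sum>i=1..n. Hm (n - i) m / real i)"
    by (simp add: Suc.IH sum.atLeast_Suc_atMost[of 0] atLeastSucAtMost_greaterThanAtMost)
  finally show ?case
    by (simp add: Hm_Suc)
qed

lemma Hm_eq_sum_stirling: "Hm n m = fact m * (\<Sum>k\<le>n. of_nat (stirling k m) / fact k)"
  unfolding Hm_eq_fps_nth fps_inverse_one_minus_fps_X fps_minus_ln_one_minus_power
    mult.assoc fps_mult_left_const_nth
  by (simp add: fps_mult_nth atLeast0AtMost)

lemma sum_choose_mult_gbinomial:
  "(\<Sum>k\<le>n. of_nat (n choose k) * (a gchoose k)) = (a + of_nat n gchoose n :: 'a::field_char_0)"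
proof -
  have "(\<Sum>k\<le>n. of_nat (n choose k) * (a gchoose k))
      = (\<Sum>k=0..n. (a gchoose k) * (of_nat n gchoose (n - k)))"
    by (intro sum.cong)
       (auto simp: atLeast0AtMost binomial_gbinomial[symmetric] binomial_symmetric[symmetric])
  also have "\<dots> = a + of_nat n gchoose n"
    by (rule gbinomial_Vandermonde)
  finally show ?thesis .
qed

lemma sum_pochhammer_div_fact:
  "(\<Sum>k\<le>n. pochhammer a k / fact k) = (a + of_nat n gchoose n :: 'a::field_char_0)"
proof -
  have "(\<Sum>k\<le>n. pochhammer a k / fact k) = (\<Sum>k\<le>n. (a - 1) + of_nat k gchoose k)"
    by (simp add: gbinomial_pochhammer')
  also have "\<dots> = a + of_nat n gchoose n"
    by (simp add: gbinomial_parallel_sum)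
  finally show ?thesis .
qed

lemma poly_pochhammer: "poly (pochhammer p k) x = pochhammer (poly p x) k"
  by (induction k) (simp_all add: pochhammer_Suc)

lemma coeff_pochhammer_linear:
  "coeff (pochhammer [:0, c:] k) j = c ^ j * of_nat (stirling k j)"
proof -
  have "[:0, c:] ^ i = monom (c ^ i) i" for i
    by (induction i) (simp_all add: monom_Suc smult_monom)
  then have "pochhammer [:0, c:] k = (\<Sum>i\<le>k. monom (c ^ i * of_nat (stirling k i)) i)"
    unfolding stirling_pochhammer[symmetric]
    by (simp add: of_nat_poly smult_monom mult.commute)
  then show ?thesis
    by (cases "j \<le> k") (simp_all add: coeff_sum)
qed

lemma neg_one_power_mult_power_diff:
  assumes "j \<le> k"
  shows "(-1) ^ k * (-1) ^ (k - j) = ((-1) ^ j :: 'a::comm_ring_1)"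
proof -
  obtain d where "k = j + d"
    using assms le_Suc_ex by blast
  moreover have "(-1) ^ d * (-1) ^ d = (1 :: 'a)"
    by (simp flip: power_mult_distrib)
  ultimately show ?thesis
    by (simp add: power_add mult.assoc)
qed

lemma coeff_pochhammer_minus_X:
  "coeff (pochhammer [:0, -1:] k) j = (-1) ^ k * (of_int (sstirling k j) :: 'a::comm_ring_1)"
proof (cases "j \<le> k")
  case True
  then show ?thesis
    using coeff_pochhammer_linear[of "-1 :: 'a" k j]
    by (simp add: sstirling_def mult.assoc[symmetric] neg_one_power_mult_power_diff)
next
  case False
  then show ?thesis
    using coeff_pochhammer_linear[of "-1 :: 'a" k j] by (simp add: sstirling_def)
qed

lemma sum_choose_sstirling_div_fact:
  "(\<Sum>k\<le>n. of_nat (n choose k) * of_int (sstirling k m) / fact k)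
     = (\<Sum>k\<le>n. of_nat (stirling k m) / fact k :: 'a::field_char_0)"
proof -
  define P :: "'a poly" where
    "P = (\<Sum>k\<le>n. smult (of_nat (n choose k) * (-1) ^ k / fact k) (pochhammer [:0, -1:] k))"
  define Q :: "'a poly" where
    "Q = (\<Sum>k\<le>n. smult (1 / fact k) (pochhammer [:0, 1:] k))"
  have "poly P = poly Q"
  proof
    fix x
    have "poly P x = (\<Sum>k\<le>n. of_nat (n choose k) * (x gchoose k))"
      by (simp add: P_def poly_sum poly_pochhammer gbinomial_pochhammer field_simps)
    also have "\<dots> = (\<Sum>k\<le>n. pochhammer x k / fact k)"
      by (simp add: sum_choose_mult_gbinomial sum_pochhammer_div_fact)
    also have "\<dots> = poly Q x"
      by (simp add: Q_def poly_sum poly_pochhammer)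
    finally show "poly P x = poly Q x" .
  qed
  then have "coeff P m = coeff Q m"
    by (simp only: poly_eq_poly_eq_iff)
  moreover have "(-1) ^ k * ((-1) ^ k * x) = (x :: 'a)" for k x
    by (simp add: mult.assoc[symmetric] flip: power_mult_distrib)
  ultimately show ?thesis
    by (simp add: P_def Q_def coeff_sum coeff_pochhammer_minus_X
        coeff_pochhammer_linear[where c = 1] mult.assoc)
qed

lemma sum_neg_one_power_choose_mult_choose:
  assumes "j \<le> n"
  shows "(\<Sum>k\<le>n. (-1) ^ k * of_nat (n choose k) * of_nat (k choose j))
           = (if j = n then (-1) ^ n else 0 :: 'a::comm_ring_1)"
proof -
  obtain d where n: "n = j + d"
    using assms le_Suc_ex by blast
  have "(\<Sum>k\<le>n. (-1) ^ k * of_nat (n choose k) * of_nat (k choose j))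
      = (\<Sum>k=j..j+d. (-1) ^ k * of_nat (n choose k) * of_nat (k choose j) :: 'a)"
    by (rule sum.mono_neutral_right) (auto simp: n not_le binomial_eq_0)
  also have "\<dots> = (\<Sum>i\<le>d. (-1) ^ (j + i) * of_nat (n choose (j + i)) * of_nat ((j + i) choose j))"
    by (simp add: sum.atLeastAtMost_shift_0 atLeast0AtMost)
  also have "\<dots> = (\<Sum>i\<le>d. (-1) ^ j * of_nat (n choose j) * ((-1) ^ i * of_nat (d choose i)))"
  proof (intro sum.cong refl)
    fix i
    assume "i \<in> {..d}"
    then have "(n choose (j + i)) * ((j + i) choose j) = (n choose j) * (d choose i)"
      using choose_mult[of j "j + i" n] by (simp add: n)
    then have "of_nat (n choose (j + i)) * of_nat ((j + i) choose j)
        = (of_nat (n choose j) * of_nat (d choose i) :: 'a)"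
      by (metis of_nat_mult)
    then show "(-1) ^ (j + i) * of_nat (n choose (j + i)) * of_nat ((j + i) choose j)
        = (-1) ^ j * of_nat (n choose j) * ((-1) ^ i * of_nat (d choose i) :: 'a)"
      by (simp add: power_add algebra_simps)
  qed
  also have "\<dots> = (-1) ^ j * of_nat (n choose j) * (\<Sum>i\<le>d. (-1) ^ i * of_nat (d choose i))"
    by (simp add: sum_distrib_left)
  also have "\<dots> = (if j = n then (-1) ^ n else 0)"
    using choose_alternating_sum[of d, where 'a = 'a] by (cases "d = 0") (simp_all add: n)
  finally show ?thesis .
qed

lemma binomial_inversion:
  fixes a b :: "nat \<Rightarrow> 'a::comm_ring_1"
  assumes "\<And>k. b k = (\<Sum>j\<le>k. of_nat (k choose j) * a j)"
  shows "(\<Sum>k\<le>n. (-1) ^ k * of_nat (n choose k) * b k) = (-1) ^ n * a n"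
proof -
  have b_upto_n: "b k = (\<Sum>j\<le>n. of_nat (k choose j) * a j)" if "k \<le> n" for k
    unfolding assms using that by (intro sum.mono_neutral_left) (auto simp: not_le binomial_eq_0)
  have "(\<Sum>k\<le>n. (-1) ^ k * of_nat (n choose k) * b k)
      = (\<Sum>k\<le>n. \<Sum>j\<le>n. (-1) ^ k * of_nat (n choose k) * of_nat (k choose j) * a j)"
    by (intro sum.cong refl) (simp add: b_upto_n sum_distrib_left mult.assoc)
  also have "\<dots> = (\<Sum>j\<le>n. (\<Sum>k\<le>n. (-1) ^ k * of_nat (n choose k) * of_nat (k choose j)) * a j)"
    by (subst sum.swap) (simp add: sum_distrib_right)
  also have "\<dots> = (\<Sum>j\<le>n. if j = n then (-1) ^ n * a j else 0)"
    by (intro sum.cong refl) (simp add: sum_neg_one_power_choose_mult_choose)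
  also have "\<dots> = (-1) ^ n * a n"
    by simp
  finally show ?thesis .
qed

theorem corollary2:
  fixes n m :: nat
  shows "((\<Sum>k=0..n. real (n choose k) * (-1) ^ k * Hm k m)
           = (-1) ^ n * fact m / fact n * real_of_int (sstirling n m)) \<and>
         ((\<Sum>k=m..n. real (n choose k) * real_of_int (sstirling k m) / fact k)
           = Hm n m / fact m)"
proof
  let ?a = "\<lambda>k. real_of_int (sstirling k m) / fact k"
  let ?b = "\<lambda>k. \<Sum>j\<le>k. real (stirling j m) / fact j"
  have b_eq: "?b k = (\<Sum>j\<le>k. of_nat (k choose j) * ?a j)" for k
    using sum_choose_sstirling_div_fact[of k m, where 'a = real] by simp
  have "(\<Sum>k=0..n. real (n choose k) * (-1) ^ k * Hm k m)
      = fact m * (\<Sum>k\<le>n. (-1) ^ k * real (n choose k) * ?b k)"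
    by (simp add: Hm_eq_sum_stirling sum_distrib_left atLeast0AtMost ac_simps)
  also have "\<dots> = fact m * ((-1) ^ n * ?a n)"
    by (simp only: binomial_inversion[of ?b ?a, OF b_eq])
  finally show "(\<Sum>k=0..n. real (n choose k) * (-1) ^ k * Hm k m)
      = (-1) ^ n * fact m / fact n * real_of_int (sstirling n m)"
    by simp
next
  have "(\<Sum>k=m..n. real (n choose k) * real_of_int (sstirling k m) / fact k)
      = (\<Sum>k\<le>n. real (n choose k) * real_of_int (sstirling k m) / fact k)"
    by (rule sum.mono_neutral_left) (auto simp: sstirling_def)
  also have "\<dots> = Hm n m / fact m"
    by (simp add: sum_choose_sstirling_div_fact[where 'a = real] Hm_eq_sum_stirling)
  finally show "(\<Sum>k=m..n. real (n choose k) * real_of_int (sstirling k m) / fact k)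
      = Hm n m / fact m" .
qed

end
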